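(* Let $(\mathcal A;\mathcal E)$ be an exact category with exact coproducts and let $\{\mathcal J_i: i\in I\}$ be a set-indexed family of special preenveloping ideals. Then $\bigcap_{i\in I}\mathcal J_i$ is a special preenveloping ideal.
   Context: An exact category $(\mathcal A;\mathcal E)$ is an additive category with a class of conflations $X\to Y\to Z$ satisfying the Quillen–Keller axioms; it has exact coproducts if set-indexed coproducts exist and coproducts of conflations are conflations. $\mathrm{Ext}(A,B)$ is the group of conflations $B\to C\to A$. Ideals are families of subgroups of Hom closed under composition with arbitrary morphisms (the family $i\mapsto\mathcal J_i$ is assumed uniformly indexed so that the intersection is a class). For $a:A_0\to A_1$, $b:B_0\to B_1$, $\mathrm{Ext}(a,b):\mathrm{Ext}(A_1,B_0)\to\mathrm{Ext}(A_0,B_1)$ is pushout along $b$ followed by pullback along $a$; ${}^\perp\mathcal J$ is the ideal of $a$ with $\mathrm{Ext}(a,j)=0$ for all $j\in\mathcal J$. A special $\mathcal J$-preenvelope of $B$ is a morphism $j:B\to C_0$ in $\mathcal J$ for which there are conflations $B\xrightarrow{j}C_0\to A_0$, $B\to C_1\to A_1$ and a morphism of conflations between them with components $(1_B,c,a)$ where $a\in{}^\perp\mathcal J$. $\mathcal J$ is special preenveloping if every object has a special $\mathcal J$-preenvelope. *)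

theory Defs
  imports Main
begin

text \<open>Hom A B is the set of morphisms A -> B
  (empty unless A, B are objects). cmp g f is the composite g o f (first f, then g).
  add is the addition of parallel morphisms, zero A B the zero morphism A -> B.
  Conf X Y Z is the set of conflations X -f-> Y -g-> Z, stored as pairs (f, g).\<close>

record ('o, 'm) excat =
  Ob   :: "'o set"
  Hom  :: "'o \<Rightarrow> 'o \<Rightarrow> 'm set"
  cmp  :: "'m \<Rightarrow> 'm \<Rightarrow> 'm"
  idt  :: "'o \<Rightarrow> 'm"
  add  :: "'m \<Rightarrow> 'm \<Rightarrow> 'm"
  zero :: "'o \<Rightarrow> 'o \<Rightarrow> 'm"
  Conf :: "'o \<Rightarrow> 'o \<Rightarrow> 'o \<Rightarrow> ('m \<times> 'm) set"

definition category_axioms :: "('o, 'm) excat \<Rightarrow> bool" where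
  "category_axioms C \<longleftrightarrow>
     (\<forall>A B. Hom C A B \<noteq> {} \<longrightarrow> A \<in> Ob C \<and> B \<in> Ob C) \<and>
     (\<forall>A\<in>Ob C. idt C A \<in> Hom C A A) \<and>
     (\<forall>A B D f g. f \<in> Hom C A B \<and> g \<in> Hom C B D \<longrightarrow> cmp C g f \<in> Hom C A D) \<and>
     (\<forall>A B D E f g h. f \<in> Hom C A B \<and> g \<in> Hom C B D \<and> h \<in> Hom C D E \<longrightarrow>
        cmp C h (cmp C g f) = cmp C (cmp C h g) f) \<and>
     (\<forall>A B f. f \<in> Hom C A B \<longrightarrow> cmp C f (idt C A) = f \<and> cmp C (idt C B) f = f)"

definition is_zero_object :: "('o, 'm) excat \<Rightarrow> 'o \<Rightarrow> bool" where
  "is_zero_object C Z \<longleftrightarrow> Z \<in> Ob C \<and>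
     (\<forall>A\<in>Ob C. Hom C Z A = {zero C Z A} \<and> Hom C A Z = {zero C A Z})"

definition is_biproduct ::
  "('o, 'm) excat \<Rightarrow> 'o \<Rightarrow> 'o \<Rightarrow> 'o \<Rightarrow> 'm \<Rightarrow> 'm \<Rightarrow> 'm \<Rightarrow> 'm \<Rightarrow> bool" where
  "is_biproduct C A B S i1 i2 p1 p2 \<longleftrightarrow> S \<in> Ob C \<and>
     i1 \<in> Hom C A S \<and> i2 \<in> Hom C B S \<and> p1 \<in> Hom C S A \<and> p2 \<in> Hom C S B \<and>
     cmp C p1 i1 = idt C A \<and> cmp C p2 i2 = idt C B \<and>
     cmp C p1 i2 = zero C B A \<and> cmp C p2 i1 = zero C A B \<and>
     add C (cmp C i1 p1) (cmp C i2 p2) = idt C S"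

definition additive_category :: "('o, 'm) excat \<Rightarrow> bool" where
  "additive_category C \<longleftrightarrow> category_axioms C \<and>
     (\<forall>A\<in>Ob C. \<forall>B\<in>Ob C.
        zero C A B \<in> Hom C A B \<and>
        (\<forall>f\<in>Hom C A B. \<forall>g\<in>Hom C A B. add C f g \<in> Hom C A B) \<and>
        (\<forall>f\<in>Hom C A B. \<forall>g\<in>Hom C A B. \<forall>h\<in>Hom C A B.
            add C (add C f g) h = add C f (add C g h)) \<and>
        (\<forall>f\<in>Hom C A B. \<forall>g\<in>Hom C A B. add C f g = add C g f) \<and>
        (\<forall>f\<in>Hom C A B. add C f (zero C A B) = f) \<and>
        (\<forall>f\<in>Hom C A B. \<exists>g\<in>Hom C A B. add C f g = zero C A B)) \<and>
     (\<forall>A B D f g g'. f \<in> Hom C A B \<and> g \<in> Hom C B D \<and> g' \<in> Hom C B D \<longrightarrow>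
        cmp C (add C g g') f = add C (cmp C g f) (cmp C g' f)) \<and>
     (\<forall>A B D f f' g. f \<in> Hom C A B \<and> f' \<in> Hom C A B \<and> g \<in> Hom C B D \<longrightarrow>
        cmp C g (add C f f') = add C (cmp C g f) (cmp C g f')) \<and>
     (\<exists>Z. is_zero_object C Z) \<and>
     (\<forall>A\<in>Ob C. \<forall>B\<in>Ob C. \<exists>S i1 i2 p1 p2. is_biproduct C A B S i1 i2 p1 p2)"

definition is_iso :: "('o, 'm) excat \<Rightarrow> 'o \<Rightarrow> 'o \<Rightarrow> 'm \<Rightarrow> bool" where
  "is_iso C A B f \<longleftrightarrow> f \<in> Hom C A B \<and>
     (\<exists>g\<in>Hom C B A. cmp C g f = idt C A \<and> cmp C f g = idt C B)"

definition is_kernel :: "('o, 'm) excat \<Rightarrow> 'o \<Rightarrow> 'o \<Rightarrow> 'o \<Rightarrow> 'm \<Rightarrow> 'm \<Rightarrow> bool" where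
  "is_kernel C X Y Z f g \<longleftrightarrow> f \<in> Hom C X Y \<and> g \<in> Hom C Y Z \<and> cmp C g f = zero C X Z \<and>
     (\<forall>W\<in>Ob C. \<forall>h\<in>Hom C W Y. cmp C g h = zero C W Z \<longrightarrow>
        (\<exists>!u. u \<in> Hom C W X \<and> cmp C f u = h))"

definition is_cokernel :: "('o, 'm) excat \<Rightarrow> 'o \<Rightarrow> 'o \<Rightarrow> 'o \<Rightarrow> 'm \<Rightarrow> 'm \<Rightarrow> bool" where
  "is_cokernel C X Y Z f g \<longleftrightarrow> f \<in> Hom C X Y \<and> g \<in> Hom C Y Z \<and> cmp C g f = zero C X Z \<and>
     (\<forall>W\<in>Ob C. \<forall>h\<in>Hom C Y W. cmp C h f = zero C X W \<longrightarrow>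
        (\<exists>!u. u \<in> Hom C Z W \<and> cmp C u g = h))"

text \<open>Morphism of short sequences X -f-> Y -g-> Z  to  X' -f'-> Y' -g'-> Z'
  with components (x, y, z).\<close>
definition conf_hom ::
  "('o, 'm) excat \<Rightarrow> 'o \<Rightarrow> 'o \<Rightarrow> 'o \<Rightarrow> 'm \<Rightarrow> 'm \<Rightarrow> 'o \<Rightarrow> 'o \<Rightarrow> 'o \<Rightarrow> 'm \<Rightarrow> 'm
     \<Rightarrow> 'm \<Rightarrow> 'm \<Rightarrow> 'm \<Rightarrow> bool" where
  "conf_hom C X Y Z f g X' Y' Z' f' g' x y z \<longleftrightarrow>
     x \<in> Hom C X X' \<and> y \<in> Hom C Y Y' \<and> z \<in> Hom C Z Z' \<and>
     cmp C y f = cmp C f' x \<and> cmp C z g = cmp C g' y"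

definition inflation :: "('o, 'm) excat \<Rightarrow> 'o \<Rightarrow> 'o \<Rightarrow> 'm \<Rightarrow> bool" where
  "inflation C X Y f \<longleftrightarrow> (\<exists>Z g. (f, g) \<in> Conf C X Y Z)"

definition deflation :: "('o, 'm) excat \<Rightarrow> 'o \<Rightarrow> 'o \<Rightarrow> 'm \<Rightarrow> bool" where
  "deflation C Y Z g \<longleftrightarrow> (\<exists>X f. (f, g) \<in> Conf C X Y Z)"

text \<open>Pushout of f : A -> B along a : A -> A', with f' : A' -> P and a' : B -> P.\<close>
definition is_pushout ::
  "('o, 'm) excat \<Rightarrow> 'o \<Rightarrow> 'o \<Rightarrow> 'o \<Rightarrow> 'o \<Rightarrow> 'm \<Rightarrow> 'm \<Rightarrow> 'm \<Rightarrow> 'm \<Rightarrow> bool" where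
  "is_pushout C A B A' P f a f' a' \<longleftrightarrow> P \<in> Ob C \<and>
     f \<in> Hom C A B \<and> a \<in> Hom C A A' \<and> f' \<in> Hom C A' P \<and> a' \<in> Hom C B P \<and>
     cmp C a' f = cmp C f' a \<and>
     (\<forall>W\<in>Ob C. \<forall>u\<in>Hom C B W. \<forall>v\<in>Hom C A' W. cmp C u f = cmp C v a \<longrightarrow>
        (\<exists>!w. w \<in> Hom C P W \<and> cmp C w a' = u \<and> cmp C w f' = v))"

text \<open>Pullback of g : B -> A along a : A' -> A, with g' : P -> A' and a' : P -> B.\<close>
definition is_pullback ::
  "('o, 'm) excat \<Rightarrow> 'o \<Rightarrow> 'o \<Rightarrow> 'o \<Rightarrow> 'o \<Rightarrow> 'm \<Rightarrow> 'm \<Rightarrow> 'm \<Rightarrow> 'm \<Rightarrow> bool" where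
  "is_pullback C A B A' P g a g' a' \<longleftrightarrow> P \<in> Ob C \<and>
     g \<in> Hom C B A \<and> a \<in> Hom C A' A \<and> g' \<in> Hom C P A' \<and> a' \<in> Hom C P B \<and>
     cmp C g a' = cmp C a g' \<and>
     (\<forall>W\<in>Ob C. \<forall>u\<in>Hom C W B. \<forall>v\<in>Hom C W A'. cmp C g u = cmp C a v \<longrightarrow>
        (\<exists>!w. w \<in> Hom C W P \<and> cmp C a' w = u \<and> cmp C g' w = v))"

text \<open>Quillen--Keller axioms (in the form of Buehler, Exact categories, Def. 2.1).\<close>
definition exact_category :: "('o, 'm) excat \<Rightarrow> bool" where
  "exact_category C \<longleftrightarrow> additive_category C \<and>
     (\<forall>X Y Z f g. (f, g) \<in> Conf C X Y Z \<longrightarrow>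
        X \<in> Ob C \<and> Y \<in> Ob C \<and> Z \<in> Ob C \<and> is_kernel C X Y Z f g \<and> is_cokernel C X Y Z f g) \<and>
     (\<forall>X Y Z f g X' Y' Z' f' g' x y z.
        (f, g) \<in> Conf C X Y Z \<and> f' \<in> Hom C X' Y' \<and> g' \<in> Hom C Y' Z' \<and>
        conf_hom C X Y Z f g X' Y' Z' f' g' x y z \<and>
        is_iso C X X' x \<and> is_iso C Y Y' y \<and> is_iso C Z Z' z \<longrightarrow> (f', g') \<in> Conf C X' Y' Z') \<and>
     (\<forall>A\<in>Ob C. inflation C A A (idt C A)) \<and>
     (\<forall>A\<in>Ob C. deflation C A A (idt C A)) \<and>
     (\<forall>A B D f g. inflation C A B f \<and> inflation C B D g \<longrightarrow> inflation C A D (cmp C g f)) \<and>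
     (\<forall>A B D f g. deflation C A B f \<and> deflation C B D g \<longrightarrow> deflation C A D (cmp C g f)) \<and>
     (\<forall>A B A' f a. inflation C A B f \<and> a \<in> Hom C A A' \<longrightarrow>
        (\<exists>P f' a'. is_pushout C A B A' P f a f' a' \<and> inflation C A' P f')) \<and>
     (\<forall>A B A' g a. deflation C B A g \<and> a \<in> Hom C A' A \<longrightarrow>
        (\<exists>P g' a'. is_pullback C A B A' P g a g' a' \<and> deflation C P A' g'))"

definition is_coproduct ::
  "('o, 'm) excat \<Rightarrow> 'i set \<Rightarrow> ('i \<Rightarrow> 'o) \<Rightarrow> 'o \<Rightarrow> ('i \<Rightarrow> 'm) \<Rightarrow> bool" where
  "is_coproduct C K X S \<iota> \<longleftrightarrow> S \<in> Ob C \<and> (\<forall>k\<in>K. \<iota> k \<in> Hom C (X k) S) \<and>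
     (\<forall>W\<in>Ob C. \<forall>h. (\<forall>k\<in>K. h k \<in> Hom C (X k) W) \<longrightarrow>
        (\<exists>!u. u \<in> Hom C S W \<and> (\<forall>k\<in>K. cmp C u (\<iota> k) = h k)))"

text \<open>Exact coproducts, for families indexed by arbitrary sets of the index type 'i:
  coproducts exist, and the coproduct of conflations (with the induced maps) is a conflation.\<close>
definition has_exact_coproducts :: "('o, 'm) excat \<Rightarrow> 'i itself \<Rightarrow> bool" where
  "has_exact_coproducts C (_ :: 'i itself) \<longleftrightarrow>
     (\<forall>(K :: 'i set) X. (\<forall>k\<in>K. X k \<in> Ob C) \<longrightarrow> (\<exists>S \<iota>. is_coproduct C K X S \<iota>)) \<and>
     (\<forall>(K :: 'i set) X Y Z f g SX \<iota>X SY \<iota>Y SZ \<iota>Z u v.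
        (\<forall>k\<in>K. (f k, g k) \<in> Conf C (X k) (Y k) (Z k)) \<and>
        is_coproduct C K X SX \<iota>X \<and> is_coproduct C K Y SY \<iota>Y \<and> is_coproduct C K Z SZ \<iota>Z \<and>
        u \<in> Hom C SX SY \<and> (\<forall>k\<in>K. cmp C u (\<iota>X k) = cmp C (\<iota>Y k) (f k)) \<and>
        v \<in> Hom C SY SZ \<and> (\<forall>k\<in>K. cmp C v (\<iota>Y k) = cmp C (\<iota>Z k) (g k)) \<longrightarrow>
        (u, v) \<in> Conf C SX SY SZ)"

definition is_ideal :: "('o, 'm) excat \<Rightarrow> ('o \<Rightarrow> 'o \<Rightarrow> 'm set) \<Rightarrow> bool" where
  "is_ideal C J \<longleftrightarrow>
     (\<forall>A B. J A B \<subseteq> Hom C A B) \<and>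
     (\<forall>A\<in>Ob C. \<forall>B\<in>Ob C. zero C A B \<in> J A B \<and>
        (\<forall>f\<in>J A B. \<forall>g\<in>J A B. add C f g \<in> J A B) \<and>
        (\<forall>f\<in>J A B. \<forall>g\<in>Hom C A B. add C f g = zero C A B \<longrightarrow> g \<in> J A B)) \<and>
     (\<forall>A B D f g. f \<in> J A B \<and> g \<in> Hom C B D \<longrightarrow> cmp C g f \<in> J A D) \<and>
     (\<forall>W A B h f. h \<in> Hom C W A \<and> f \<in> J A B \<longrightarrow> cmp C f h \<in> J W B)"

definition splits :: "('o, 'm) excat \<Rightarrow> 'o \<Rightarrow> 'o \<Rightarrow> 'm \<Rightarrow> bool" where
  "splits C X Y f \<longleftrightarrow> (\<exists>r\<in>Hom C Y X. cmp C r f = idt C X)"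

text \<open>Ext(a,b) = 0 for a : A0 -> A1 and b : B0 -> B1: for every conflation
  xi : B0 -> D -> A1, the conflation obtained by pushout along b (i.e. any conflation
  B1 -> E -> A1 receiving a morphism of conflations (b, d, 1) from xi) followed by pullback
  along a (any conflation B1 -> F -> A0 with a morphism of conflations (1, e, a) to it) splits.\<close>
definition Ext_zero ::
  "('o, 'm) excat \<Rightarrow> 'o \<Rightarrow> 'o \<Rightarrow> 'm \<Rightarrow> 'o \<Rightarrow> 'o \<Rightarrow> 'm \<Rightarrow> bool" where
  "Ext_zero C A0 A1 a B0 B1 b \<longleftrightarrow>
     (\<forall>D f g E f' g' d F f'' g'' e.
        (f, g) \<in> Conf C B0 D A1 \<and>
        (f', g') \<in> Conf C B1 E A1 \<and> conf_hom C B0 D A1 f g B1 E A1 f' g' b d (idt C A1) \<and>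
        (f'', g'') \<in> Conf C B1 F A0 \<and> conf_hom C B1 F A0 f'' g'' B1 E A1 f' g' (idt C B1) e a
        \<longrightarrow> splits C B1 F f'')"

definition perp_ideal :: "('o, 'm) excat \<Rightarrow> ('o \<Rightarrow> 'o \<Rightarrow> 'm set) \<Rightarrow> 'o \<Rightarrow> 'o \<Rightarrow> 'm set" where
  "perp_ideal C J A0 A1 =
     {a \<in> Hom C A0 A1. \<forall>B0 B1. \<forall>b\<in>J B0 B1. Ext_zero C A0 A1 a B0 B1 b}"

definition special_preenvelope ::
  "('o, 'm) excat \<Rightarrow> ('o \<Rightarrow> 'o \<Rightarrow> 'm set) \<Rightarrow> 'o \<Rightarrow> 'o \<Rightarrow> 'm \<Rightarrow> bool" where
  "special_preenvelope C J B C0 j \<longleftrightarrow> j \<in> J B C0 \<and>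
     (\<exists>A0 p0 C1 A1 j1 p1 c a.
        (j, p0) \<in> Conf C B C0 A0 \<and> (j1, p1) \<in> Conf C B C1 A1 \<and>
        conf_hom C B C0 A0 j p0 B C1 A1 j1 p1 (idt C B) c a \<and>
        a \<in> perp_ideal C J A0 A1)"

definition special_preenveloping :: "('o, 'm) excat \<Rightarrow> ('o \<Rightarrow> 'o \<Rightarrow> 'm set) \<Rightarrow> bool" where
  "special_preenveloping C J \<longleftrightarrow> is_ideal C J \<and>
     (\<forall>B\<in>Ob C. \<exists>C0 j. special_preenvelope C J B C0 j)"

text \<open>Intersection of a family of ideals (taken inside Hom, so that the empty
  intersection is the ideal of all morphisms).\<close>
definition Inter_ideal ::
  "('o, 'm) excat \<Rightarrow> 'i set \<Rightarrow> ('i \<Rightarrow> 'o \<Rightarrow> 'o \<Rightarrow> 'm set) \<Rightarrow> 'o \<Rightarrow> 'o \<Rightarrow> 'm set" where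
  "Inter_ideal C I J A B = Hom C A B \<inter> (\<Inter>i\<in>I. J i A B)"

end

theory Submission
  imports Defs
begin

(*
  For each i choose a special J i-preenvelope B -> C0 i -> A0 i, with its morphism (1, c i, a i)
  to a conflation B -> C1 i -> A1 i and a i Ext-orthogonal to J i. Exact coproducts turn the
  coproduct of these data into the same kind of configuration over a coproduct of copies of B,
  and the coproduct map of the a i is Ext-orthogonal to the intersection: pulling back along the
  coprojections reduces Ext(coproduct of the a i, b) to the vanishing Ext(a i, b), and a
  conflation over a coproduct splits once its deflation has sections on all coprojections.
  Pushing out along the codiagonal to B preserves the configuration and yields a conflation
  B -> P -> A whose inflation factors through every j i, hence lies in every J i.
*)

locale exact_cat =
  fixes C :: "('o, 'm) excat"
  assumes exact: "exact_category C"
begin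

lemma additive: "additive_category C"
  using exact unfolding exact_category_def by blast

lemma category: "category_axioms C"
  using additive unfolding additive_category_def by blast

lemma Hom_objects: "f \<in> Hom C A B \<Longrightarrow> A \<in> Ob C \<and> B \<in> Ob C"
  using category unfolding category_axioms_def by blast

lemma idt_Hom: "A \<in> Ob C \<Longrightarrow> idt C A \<in> Hom C A A"
  using category unfolding category_axioms_def by blast

lemma cmp_Hom: "f \<in> Hom C A B \<Longrightarrow> g \<in> Hom C B D \<Longrightarrow> cmp C g f \<in> Hom C A D"
  using category unfolding category_axioms_def by blast

lemma cmp_assoc:
  "f \<in> Hom C A B \<Longrightarrow> g \<in> Hom C B D \<Longrightarrow> h \<in> Hom C D E \<Longrightarrow>
    cmp C h (cmp C g f) = cmp C (cmp C h g) f"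
  using category unfolding category_axioms_def by blast

lemma cmp_idt_right: "f \<in> Hom C A B \<Longrightarrow> cmp C f (idt C A) = f"
  using category unfolding category_axioms_def by blast

lemma cmp_idt_left: "f \<in> Hom C A B \<Longrightarrow> cmp C (idt C B) f = f"
  using category unfolding category_axioms_def by blast

lemma Hom_abelian_group:
  assumes "A \<in> Ob C" "B \<in> Ob C"
  shows "zero C A B \<in> Hom C A B \<and>
    (\<forall>f\<in>Hom C A B. \<forall>g\<in>Hom C A B. add C f g \<in> Hom C A B) \<and>
    (\<forall>f\<in>Hom C A B. \<forall>g\<in>Hom C A B. \<forall>h\<in>Hom C A B.
        add C (add C f g) h = add C f (add C g h)) \<and>
    (\<forall>f\<in>Hom C A B. \<forall>g\<in>Hom C A B. add C f g = add C g f) \<and>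
    (\<forall>f\<in>Hom C A B. add C f (zero C A B) = f) \<and>
    (\<forall>f\<in>Hom C A B. \<exists>g\<in>Hom C A B. add C f g = zero C A B)"
  using additive[unfolded additive_category_def, THEN conjunct2, THEN conjunct1] assms by blast

lemma zero_Hom: "A \<in> Ob C \<Longrightarrow> B \<in> Ob C \<Longrightarrow> zero C A B \<in> Hom C A B"
  using Hom_abelian_group by blast

lemma add_Hom:
  assumes "f \<in> Hom C A B" "g \<in> Hom C A B"
  shows "add C f g \<in> Hom C A B"
  using Hom_abelian_group[of A B] Hom_objects[OF assms(1)] assms by blast

lemma add_assoc:
  assumes "f \<in> Hom C A B" "g \<in> Hom C A B" "h \<in> Hom C A B"
  shows "add C (add C f g) h = add C f (add C g h)"
  using Hom_abelian_group[of A B] Hom_objects[OF assms(1)] assms by blast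

lemma add_comm:
  assumes "f \<in> Hom C A B" "g \<in> Hom C A B"
  shows "add C f g = add C g f"
  using Hom_abelian_group[of A B] Hom_objects[OF assms(1)] assms by blast

lemma add_zero:
  assumes "f \<in> Hom C A B"
  shows "add C f (zero C A B) = f"
  using Hom_abelian_group[of A B] Hom_objects[OF assms(1)] assms by blast

lemma zero_add: "f \<in> Hom C A B \<Longrightarrow> add C (zero C A B) f = f"
  by (metis add_comm add_zero Hom_objects zero_Hom)

lemma add_inverse_ex:
  assumes "f \<in> Hom C A B"
  shows "\<exists>g\<in>Hom C A B. add C f g = zero C A B"
  using Hom_abelian_group[of A B] Hom_objects[OF assms(1)] assms by blast

lemma add_cmp_distrib:
  "f \<in> Hom C A B \<Longrightarrow> g \<in> Hom C B D \<Longrightarrow> g' \<in> Hom C B D \<Longrightarrow>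
    cmp C (add C g g') f = add C (cmp C g f) (cmp C g' f)"
  using additive[unfolded additive_category_def, THEN conjunct2, THEN conjunct2, THEN conjunct1]
  by blast

lemma cmp_add_distrib:
  "f \<in> Hom C A B \<Longrightarrow> f' \<in> Hom C A B \<Longrightarrow> g \<in> Hom C B D \<Longrightarrow>
    cmp C g (add C f f') = add C (cmp C g f) (cmp C g f')"
  using additive[unfolded additive_category_def, THEN conjunct2, THEN conjunct2, THEN conjunct2,
      THEN conjunct1]
  by blast

lemma add_eq_self_imp_zero:
  assumes x: "x \<in> Hom C A B" and y: "y \<in> Hom C A B" and xy: "add C x y = x"
  shows "y = zero C A B"
proof -
  obtain n where n: "n \<in> Hom C A B" "add C x n = zero C A B"
    using add_inverse_ex[OF x] by blast
  have "y = add C y (add C x n)" using n add_zero[OF y] by simp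
  also have "\<dots> = add C (add C x y) n" using add_assoc[OF y x n(1)] add_comm[OF x y] by simp
  also have "\<dots> = zero C A B" using xy n by simp
  finally show ?thesis .
qed

lemma cmp_zero:
  assumes g: "g \<in> Hom C B D" and A: "A \<in> Ob C"
  shows "cmp C g (zero C A B) = zero C A D"
proof -
  have z: "zero C A B \<in> Hom C A B" using zero_Hom[OF A] Hom_objects[OF g] by blast
  have "add C (cmp C g (zero C A B)) (cmp C g (zero C A B)) = cmp C g (zero C A B)"
    using cmp_add_distrib[OF z z g] add_zero[OF z] by simp
  then show ?thesis using add_eq_self_imp_zero cmp_Hom[OF z g] by blast
qed

lemma zero_cmp:
  assumes f: "f \<in> Hom C A B" and D: "D \<in> Ob C"
  shows "cmp C (zero C B D) f = zero C A D"
proof -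
  have z: "zero C B D \<in> Hom C B D" using zero_Hom[OF _ D] Hom_objects[OF f] by blast
  have "add C (cmp C (zero C B D) f) (cmp C (zero C B D) f) = cmp C (zero C B D) f"
    using add_cmp_distrib[OF f z z] add_zero[OF z] by simp
  then show ?thesis using add_eq_self_imp_zero cmp_Hom[OF f z] by blast
qed

(* Stands in for 1 - t: the Hom-groups come without a subtraction operation. *)
lemma add_complement_ex:
  assumes t: "t \<in> Hom C Y Y"
  shows "\<exists>h\<in>Hom C Y Y. add C t h = idt C Y"
proof -
  obtain n where n: "n \<in> Hom C Y Y" "add C t n = zero C Y Y"
    using add_inverse_ex[OF t] by blast
  have one: "idt C Y \<in> Hom C Y Y" using idt_Hom Hom_objects[OF t] by blast
  have "add C t (add C n (idt C Y)) = idt C Y"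
    using add_assoc[OF t n(1) one, symmetric] n(2) zero_add[OF one] by simp
  then show ?thesis using add_Hom[OF n(1) one] by blast
qed

lemma idt_iso: "A \<in> Ob C \<Longrightarrow> is_iso C A A (idt C A)"
  unfolding is_iso_def by (metis idt_Hom cmp_idt_left)

section \<open>Conflations\<close>

lemma conflation_facts:
  "(f, g) \<in> Conf C X Y Z \<Longrightarrow>
    X \<in> Ob C \<and> Y \<in> Ob C \<and> Z \<in> Ob C \<and> is_kernel C X Y Z f g \<and> is_cokernel C X Y Z f g"
  by (rule exact[unfolded exact_category_def, THEN conjunct2, THEN conjunct1, rule_format])

lemma conflation_data:
  assumes "(f, g) \<in> Conf C X Y Z"
  shows "X \<in> Ob C" "Y \<in> Ob C" "Z \<in> Ob C" "f \<in> Hom C X Y" "g \<in> Hom C Y Z"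
    "cmp C g f = zero C X Z"
  using conflation_facts[OF assms] unfolding is_kernel_def by blast+

lemma conflation_iso_closed:
  assumes "(f, g) \<in> Conf C X Y Z" "f' \<in> Hom C X' Y'" "g' \<in> Hom C Y' Z'"
    "conf_hom C X Y Z f g X' Y' Z' f' g' x y z"
    "is_iso C X X' x" "is_iso C Y Y' y" "is_iso C Z Z' z"
  shows "(f', g') \<in> Conf C X' Y' Z'"
  by (rule exact[unfolded exact_category_def, THEN conjunct2, THEN conjunct2, THEN conjunct1,
        rule_format]) (use assms in blast)

lemma inflation_factor_unique:
  assumes c: "(f, g) \<in> Conf C X Y Z" and h: "h \<in> Hom C W Y" and gh: "cmp C g h = zero C W Z"
  shows "\<exists>!u. u \<in> Hom C W X \<and> cmp C f u = h"
proof -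
  have "is_kernel C X Y Z f g" using conflation_facts[OF c] by blast
  then show ?thesis using h gh Hom_objects[OF h] unfolding is_kernel_def by simp
qed

lemma deflation_factor_unique:
  assumes c: "(f, g) \<in> Conf C X Y Z" and h: "h \<in> Hom C Y W" and hf: "cmp C h f = zero C X W"
  shows "\<exists>!u. u \<in> Hom C Z W \<and> cmp C u g = h"
proof -
  have "is_cokernel C X Y Z f g" using conflation_facts[OF c] by blast
  then show ?thesis using h hf Hom_objects[OF h] unfolding is_cokernel_def by simp
qed

lemma inflation_factor:
  "(f, g) \<in> Conf C X Y Z \<Longrightarrow> h \<in> Hom C W Y \<Longrightarrow> cmp C g h = zero C W Z \<Longrightarrow>
    \<exists>u\<in>Hom C W X. cmp C f u = h"
  using inflation_factor_unique by blast

lemma deflation_factor: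
  "(f, g) \<in> Conf C X Y Z \<Longrightarrow> h \<in> Hom C Y W \<Longrightarrow> cmp C h f = zero C X W \<Longrightarrow>
    \<exists>u\<in>Hom C Z W. cmp C u g = h"
  using deflation_factor_unique by blast

lemma inflation_mono:
  assumes c: "(f, g) \<in> Conf C X Y Z" and u1: "u1 \<in> Hom C W X" and u2: "u2 \<in> Hom C W X"
    and eq: "cmp C f u1 = cmp C f u2"
  shows "u1 = u2"
proof -
  note d = conflation_data[OF c]
  have "cmp C g (cmp C f u1) = zero C W Z"
    using cmp_assoc[OF u1 d(4,5)] d(6) zero_cmp[OF u1 d(3)] by simp
  then show ?thesis
    using inflation_factor_unique[OF c cmp_Hom[OF u1 d(4)]] u1 u2 eq by (metis (no_types, lifting))
qed

lemma deflation_epi: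
  assumes c: "(f, g) \<in> Conf C X Y Z" and u1: "u1 \<in> Hom C Z W" and u2: "u2 \<in> Hom C Z W"
    and eq: "cmp C u1 g = cmp C u2 g"
  shows "u1 = u2"
proof -
  note d = conflation_data[OF c]
  have "cmp C (cmp C u1 g) f = zero C X W"
    using cmp_assoc[OF d(4,5) u1] d(6) cmp_zero[OF u1 d(1)] by simp
  then show ?thesis
    using deflation_factor_unique[OF c cmp_Hom[OF d(5) u1]] u1 u2 eq by (metis (no_types, lifting))
qed

lemma conflation_iso_first:
  assumes c: "(f0, g) \<in> Conf C X0 Y Z" and x: "is_iso C X0 X x"
    and f: "f \<in> Hom C X Y" and fx: "cmp C f x = f0"
  shows "(f, g) \<in> Conf C X Y Z"
proof -
  note d = conflation_data[OF c]
  have "x \<in> Hom C X0 X" using x unfolding is_iso_def by blast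
  then have "conf_hom C X0 Y Z f0 g X Y Z f g x (idt C Y) (idt C Z)"
    unfolding conf_hom_def using idt_Hom[OF d(2)] idt_Hom[OF d(3)] cmp_idt_left[OF d(4)] fx
      cmp_idt_left[OF d(5)] cmp_idt_right[OF d(5)] by simp
  then show ?thesis
    using conflation_iso_closed[OF c f d(5) _ x idt_iso[OF d(2)] idt_iso[OF d(3)]] by blast
qed

lemma conflation_iso_last:
  assumes c: "(f, g0) \<in> Conf C X Y Z0" and z: "is_iso C Z0 Z z"
    and g: "g \<in> Hom C Y Z" and zg: "cmp C z g0 = g"
  shows "(f, g) \<in> Conf C X Y Z"
proof -
  note d = conflation_data[OF c]
  have "z \<in> Hom C Z0 Z" using z unfolding is_iso_def by blast
  then have "conf_hom C X Y Z0 f g0 X Y Z f g (idt C X) (idt C Y) z"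
    unfolding conf_hom_def using idt_Hom[OF d(1)] idt_Hom[OF d(2)] cmp_idt_left[OF d(4)]
      cmp_idt_right[OF d(4)] cmp_idt_right[OF g] zg by simp
  then show ?thesis
    using conflation_iso_closed[OF c d(4) g _ idt_iso[OF d(1)] idt_iso[OF d(2)] z] by blast
qed

lemma splits_if_section:
  assumes c: "(f, g) \<in> Conf C X Y Z" and s: "s \<in> Hom C Z Y" and gs: "cmp C g s = idt C Z"
  shows "splits C X Y f"
proof -
  note d = conflation_data[OF c]
  have t: "cmp C s g \<in> Hom C Y Y" using cmp_Hom[OF d(5) s] .
  then obtain h where h: "h \<in> Hom C Y Y" "add C (cmp C s g) h = idt C Y"
    using add_complement_ex by blast
  have "add C g (cmp C g h) = g"
    using cmp_add_distrib[OF t h(1) d(5)] h(2) cmp_assoc[OF d(5) s d(5)] gs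
      cmp_idt_left[OF d(5)] cmp_idt_right[OF d(5)] by simp
  then have "cmp C g h = zero C Y Z"
    using add_eq_self_imp_zero[OF d(5) cmp_Hom[OF h(1) d(5)]] by blast
  then obtain r where r: "r \<in> Hom C Y X" "cmp C f r = h"
    using inflation_factor[OF c h(1)] by blast
  have "add C (zero C X Y) (cmp C h f) = f"
    using add_cmp_distrib[OF d(4) t h(1)] h(2) cmp_assoc[OF d(4,5) s] d(6)
      cmp_zero[OF s d(1)] cmp_idt_left[OF d(4)] by simp
  then have "cmp C f (cmp C r f) = cmp C f (idt C X)"
    using zero_add[OF cmp_Hom[OF d(4) h(1)]] cmp_assoc[OF d(4) r(1) d(4)] r(2)
      cmp_idt_right[OF d(4)] by simp
  then have "cmp C r f = idt C X"
    using inflation_mono[OF c cmp_Hom[OF d(4) r(1)] idt_Hom[OF d(1)]] by blast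
  then show ?thesis unfolding splits_def using r(1) by blast
qed

lemma section_if_splits:
  assumes c: "(f, g) \<in> Conf C X Y Z" and r: "r \<in> Hom C Y X" and rf: "cmp C r f = idt C X"
  shows "\<exists>s\<in>Hom C Z Y. cmp C g s = idt C Z"
proof -
  note d = conflation_data[OF c]
  have t: "cmp C f r \<in> Hom C Y Y" using cmp_Hom[OF r d(4)] .
  then obtain h where h: "h \<in> Hom C Y Y" "add C (cmp C f r) h = idt C Y"
    using add_complement_ex by blast
  have "add C f (cmp C h f) = f"
    using add_cmp_distrib[OF d(4) t h(1)] h(2) cmp_assoc[OF d(4) r d(4)] rf
      cmp_idt_left[OF d(4)] cmp_idt_right[OF d(4)] by simp
  then have "cmp C h f = zero C X Y"
    using add_eq_self_imp_zero[OF d(4) cmp_Hom[OF d(4) h(1)]] by blast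
  then obtain s where s: "s \<in> Hom C Z Y" "cmp C s g = h"
    using deflation_factor[OF c h(1)] by blast
  have "add C (zero C Y Z) (cmp C g h) = g"
    using cmp_add_distrib[OF t h(1) d(5)] h(2) cmp_assoc[OF r d(4,5)] d(6)
      zero_cmp[OF r d(3)] cmp_idt_right[OF d(5)] by simp
  then have "cmp C (cmp C g s) g = cmp C (idt C Z) g"
    using zero_add[OF cmp_Hom[OF h(1) d(5)]] cmp_assoc[OF d(5) s(1) d(5)] s(2)
      cmp_idt_left[OF d(5)] by simp
  then have "cmp C g s = idt C Z"
    using deflation_epi[OF c cmp_Hom[OF s(1) d(5)] idt_Hom[OF d(3)]] by blast
  then show ?thesis using s(1) by blast
qed

section \<open>Pullbacks and pushouts of conflations\<close>

lemma pushout_inflation_ex: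
  "inflation C A B f \<Longrightarrow> a \<in> Hom C A A' \<Longrightarrow>
    \<exists>P f' a'. is_pushout C A B A' P f a f' a' \<and> inflation C A' P f'"
  using exact[unfolded exact_category_def, THEN conjunct2, THEN conjunct2, THEN conjunct2,
      THEN conjunct2, THEN conjunct2, THEN conjunct2, THEN conjunct2, THEN conjunct1]
  by blast

lemma pullback_deflation_ex:
  "deflation C B A g \<Longrightarrow> a \<in> Hom C A' A \<Longrightarrow>
    \<exists>P g' a'. is_pullback C A B A' P g a g' a' \<and> deflation C P A' g'"
  using exact[unfolded exact_category_def, THEN conjunct2, THEN conjunct2, THEN conjunct2,
      THEN conjunct2, THEN conjunct2, THEN conjunct2, THEN conjunct2, THEN conjunct2]
  by blast

lemma pullback_data:
  assumes "is_pullback C A B A' P g a g' a'"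
  shows "P \<in> Ob C" "g \<in> Hom C B A" "a \<in> Hom C A' A" "g' \<in> Hom C P A'" "a' \<in> Hom C P B"
    "cmp C g a' = cmp C a g'"
  using assms unfolding is_pullback_def by blast+

lemma pullback_factor_unique:
  assumes pb: "is_pullback C A B A' P g a g' a'"
    and u: "u \<in> Hom C W B" and v: "v \<in> Hom C W A'" and uv: "cmp C g u = cmp C a v"
  shows "\<exists>!w. w \<in> Hom C W P \<and> cmp C a' w = u \<and> cmp C g' w = v"
  using pb u v uv Hom_objects[OF u] unfolding is_pullback_def by simp

lemma pullback_factor:
  "is_pullback C A B A' P g a g' a' \<Longrightarrow> u \<in> Hom C W B \<Longrightarrow> v \<in> Hom C W A' \<Longrightarrow>
    cmp C g u = cmp C a v \<Longrightarrow> \<exists>w\<in>Hom C W P. cmp C a' w = u \<and> cmp C g' w = v"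
  using pullback_factor_unique by blast

lemma pullback_hom_eqI:
  assumes pb: "is_pullback C A B A' P g a g' a'"
    and w1: "w1 \<in> Hom C W P" and w2: "w2 \<in> Hom C W P"
    and eq1: "cmp C a' w1 = cmp C a' w2" and eq2: "cmp C g' w1 = cmp C g' w2"
  shows "w1 = w2"
proof -
  note p = pullback_data[OF pb]
  have "cmp C g (cmp C a' w1) = cmp C a (cmp C g' w1)"
    using cmp_assoc[OF w1 p(5) p(2)] cmp_assoc[OF w1 p(4) p(3)] p(6) by simp
  then show ?thesis
    using pullback_factor_unique[OF pb cmp_Hom[OF w1 p(5)] cmp_Hom[OF w1 p(4)]] w1 w2 eq1 eq2
    by (metis (no_types, lifting))
qed

lemma pushout_data:
  assumes "is_pushout C A B A' P f a f' a'"
  shows "P \<in> Ob C" "f \<in> Hom C A B" "a \<in> Hom C A A'" "f' \<in> Hom C A' P" "a' \<in> Hom C B P"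
    "cmp C a' f = cmp C f' a"
  using assms unfolding is_pushout_def by blast+

lemma pushout_factor_unique:
  assumes po: "is_pushout C A B A' P f a f' a'"
    and u: "u \<in> Hom C B W" and v: "v \<in> Hom C A' W" and uv: "cmp C u f = cmp C v a"
  shows "\<exists>!w. w \<in> Hom C P W \<and> cmp C w a' = u \<and> cmp C w f' = v"
  using po u v uv Hom_objects[OF u] unfolding is_pushout_def by simp

lemma pushout_factor:
  "is_pushout C A B A' P f a f' a' \<Longrightarrow> u \<in> Hom C B W \<Longrightarrow> v \<in> Hom C A' W \<Longrightarrow>
    cmp C u f = cmp C v a \<Longrightarrow> \<exists>w\<in>Hom C P W. cmp C w a' = u \<and> cmp C w f' = v"
  using pushout_factor_unique by blast

lemma pushout_hom_eqI:
  assumes po: "is_pushout C A B A' P f a f' a'"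
    and w1: "w1 \<in> Hom C P W" and w2: "w2 \<in> Hom C P W"
    and eq1: "cmp C w1 a' = cmp C w2 a'" and eq2: "cmp C w1 f' = cmp C w2 f'"
  shows "w1 = w2"
proof -
  note p = pushout_data[OF po]
  have "cmp C (cmp C w1 a') f = cmp C (cmp C w1 f') a"
    using cmp_assoc[OF p(2) p(5) w1] cmp_assoc[OF p(3) p(4) w1] p(6) by simp
  then show ?thesis
    using pushout_factor_unique[OF po cmp_Hom[OF p(5) w1] cmp_Hom[OF p(4) w1]] w1 w2 eq1 eq2
    by (metis (no_types, lifting))
qed

lemma pullback_conflation:
  assumes c: "(f, g) \<in> Conf C X Y Z" and m: "m \<in> Hom C W Z"
  obtains P f' g' m'
  where "is_pullback C Z Y W P g m g' m'" "(f', g') \<in> Conf C X P W" "cmp C m' f' = f"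
proof -
  note d = conflation_data[OF c]
  have "deflation C Y Z g" unfolding deflation_def using c by blast
  then obtain P g' m' where pb: "is_pullback C Z Y W P g m g' m'" and "deflation C P W g'"
    using pullback_deflation_ex m by blast
  then obtain X0 f0 where c0: "(f0, g') \<in> Conf C X0 P W" unfolding deflation_def by blast
  note d0 = conflation_data[OF c0] and p = pullback_data[OF pb]
  obtain f' where f': "f' \<in> Hom C X P" "cmp C m' f' = f" "cmp C g' f' = zero C X W"
    using pullback_factor[OF pb d(4) zero_Hom[OF d(1) d0(3)]] d(6) cmp_zero[OF m d(1)] by auto
  have "cmp C g (cmp C m' f0) = zero C X0 Z"
    using cmp_assoc[OF d0(4) p(5) p(2)] p(6) cmp_assoc[OF d0(4) p(4) m] d0(6) cmp_zero[OF m d0(1)]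
    by simp
  then obtain x where x: "x \<in> Hom C X0 X" "cmp C f x = cmp C m' f0"
    using inflation_factor[OF c cmp_Hom[OF d0(4) p(5)]] by blast
  obtain y where y: "y \<in> Hom C X X0" "cmp C f0 y = f'"
    using inflation_factor[OF c0 f'(1) f'(3)] by blast
  have f'x: "cmp C f' x = f0"
  proof (rule pullback_hom_eqI[OF pb cmp_Hom[OF x(1) f'(1)] d0(4)])
    show "cmp C m' (cmp C f' x) = cmp C m' f0"
      using cmp_assoc[OF x(1) f'(1) p(5)] f'(2) x(2) by simp
    show "cmp C g' (cmp C f' x) = cmp C g' f0"
      using cmp_assoc[OF x(1) f'(1) p(4)] f'(3) zero_cmp[OF x(1) d0(3)] d0(6) by simp
  qed
  have "cmp C f (cmp C x y) = cmp C f (idt C X)"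
    using cmp_assoc[OF y(1) x(1) d(4)] x(2) cmp_assoc[OF y(1) d0(4) p(5)] y(2) f'(2)
      cmp_idt_right[OF d(4)] by simp
  then have xy: "cmp C x y = idt C X"
    using inflation_mono[OF c cmp_Hom[OF y(1) x(1)] idt_Hom[OF d(1)]] by blast
  have "cmp C f0 (cmp C y x) = cmp C f0 (idt C X0)"
    using cmp_assoc[OF x(1) y(1) d0(4)] y(2) f'x cmp_idt_right[OF d0(4)] by simp
  then have yx: "cmp C y x = idt C X0"
    using inflation_mono[OF c0 cmp_Hom[OF x(1) y(1)] idt_Hom[OF d0(1)]] by blast
  have "is_iso C X0 X x" unfolding is_iso_def using x(1) y(1) xy yx by blast
  then have "(f', g') \<in> Conf C X P W" using conflation_iso_first[OF c0 _ f'(1) f'x] by blast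
  then show thesis using that pb f'(2) by blast
qed

lemma pushout_conflation:
  assumes c: "(f, g) \<in> Conf C X Y Z" and n: "n \<in> Hom C X V"
  obtains P f' g' n'
  where "is_pushout C X Y V P f n f' n'" "(f', g') \<in> Conf C V P Z" "cmp C g' n' = g"
proof -
  note d = conflation_data[OF c]
  have "inflation C X Y f" unfolding inflation_def using c by blast
  then obtain P f' n' where po: "is_pushout C X Y V P f n f' n'" and "inflation C V P f'"
    using pushout_inflation_ex n by blast
  then obtain Z0 g0 where c0: "(f', g0) \<in> Conf C V P Z0" unfolding inflation_def by blast
  note d0 = conflation_data[OF c0] and p = pushout_data[OF po]
  obtain g' where g': "g' \<in> Hom C P Z" "cmp C g' n' = g" "cmp C g' f' = zero C V Z"
    using pushout_factor[OF po d(5) zero_Hom[OF d0(1) d(3)]] d(6) zero_cmp[OF n d(3)] by auto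
  have "cmp C (cmp C g0 n') f = zero C X Z0"
    using cmp_assoc[OF p(2) p(5) d0(5)] p(6) cmp_assoc[OF n p(4) d0(5)] d0(6) zero_cmp[OF n d0(3)]
    by simp
  then obtain z where z: "z \<in> Hom C Z Z0" "cmp C z g = cmp C g0 n'"
    using deflation_factor[OF c cmp_Hom[OF p(5) d0(5)]] by blast
  obtain y where y: "y \<in> Hom C Z0 Z" "cmp C y g0 = g'"
    using deflation_factor[OF c0 g'(1) g'(3)] by blast
  have zg': "cmp C z g' = g0"
  proof (rule pushout_hom_eqI[OF po cmp_Hom[OF g'(1) z(1)] d0(5)])
    show "cmp C (cmp C z g') n' = cmp C g0 n'"
      using cmp_assoc[OF p(5) g'(1) z(1)] g'(2) z(2) by simp
    show "cmp C (cmp C z g') f' = cmp C g0 f'"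
      using cmp_assoc[OF p(4) g'(1) z(1)] g'(3) cmp_zero[OF z(1) d0(1)] d0(6) by simp
  qed
  have "cmp C (cmp C y z) g = cmp C (idt C Z) g"
    using cmp_assoc[OF d(5) z(1) y(1)] z(2) cmp_assoc[OF p(5) d0(5) y(1)] y(2) g'(2)
      cmp_idt_left[OF d(5)] by simp
  then have yz: "cmp C y z = idt C Z"
    using deflation_epi[OF c cmp_Hom[OF z(1) y(1)] idt_Hom[OF d(3)]] by blast
  have "cmp C (cmp C z y) g0 = cmp C (idt C Z0) g0"
    using cmp_assoc[OF d0(5) y(1) z(1)] y(2) zg' cmp_idt_left[OF d0(5)] by simp
  then have zy: "cmp C z y = idt C Z0"
    using deflation_epi[OF c0 cmp_Hom[OF y(1) z(1)] idt_Hom[OF d0(3)]] by blast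
  have "is_iso C Z0 Z y" unfolding is_iso_def using y(1) z(1) yz zy by blast
  then have "(f', g') \<in> Conf C V P Z" using conflation_iso_last[OF c0 _ g'(1) y(2)] by blast
  then show thesis using that po g'(2) by blast
qed

lemma pullback_conf_hom:
  assumes h: "conf_hom C X1 Y1 Z1 f1 g1 X2 Y2 Z2 f2 g2 x y z"
    and c1: "(f1, g1) \<in> Conf C X1 Y1 Z1"
    and pb2: "is_pullback C Z2 Y2 W2 P2 g2 m2 g2' m2'"
    and c2': "(f2', g2') \<in> Conf C X2 P2 W2" and m2'f2': "cmp C m2' f2' = f2"
    and c1': "(f1', g1') \<in> Conf C X1 P1 W1" and m1': "m1' \<in> Hom C P1 Y1"
    and m1'f1': "cmp C m1' f1' = f1" and sq1: "cmp C g1 m1' = cmp C m1 g1'"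
    and m1: "m1 \<in> Hom C W1 Z1" and w: "w \<in> Hom C W1 W2" and zm: "cmp C z m1 = cmp C m2 w"
  obtains y' where "conf_hom C X1 P1 W1 f1' g1' X2 P2 W2 f2' g2' x y' w"
proof -
  have x: "x \<in> Hom C X1 X2" and y: "y \<in> Hom C Y1 Y2" and z: "z \<in> Hom C Z1 Z2"
    and yf: "cmp C y f1 = cmp C f2 x" and zg: "cmp C z g1 = cmp C g2 y"
    using h unfolding conf_hom_def by auto
  note d1 = conflation_data[OF c1] and d1' = conflation_data[OF c1']
    and d2' = conflation_data[OF c2'] and p = pullback_data[OF pb2]
  have "cmp C g2 (cmp C y m1') = cmp C (cmp C z g1) m1'"
    using cmp_assoc[OF m1' y p(2)] zg by simp
  also have "\<dots> = cmp C (cmp C z m1) g1'"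
    using cmp_assoc[OF m1' d1(5) z] sq1 cmp_assoc[OF d1'(5) m1 z] by simp
  also have "\<dots> = cmp C m2 (cmp C w g1')"
    using zm cmp_assoc[OF d1'(5) w p(3)] by simp
  finally obtain y' where y': "y' \<in> Hom C P1 P2" "cmp C m2' y' = cmp C y m1'"
      "cmp C g2' y' = cmp C w g1'"
    using pullback_factor[OF pb2 cmp_Hom[OF m1' y] cmp_Hom[OF d1'(5) w]] by blast
  have "cmp C y' f1' = cmp C f2' x"
  proof (rule pullback_hom_eqI[OF pb2 cmp_Hom[OF d1'(4) y'(1)] cmp_Hom[OF x d2'(4)]])
    show "cmp C m2' (cmp C y' f1') = cmp C m2' (cmp C f2' x)"
      using cmp_assoc[OF d1'(4) y'(1) p(5)] y'(2) cmp_assoc[OF d1'(4) m1' y] m1'f1' yf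
        cmp_assoc[OF x d2'(4) p(5)] m2'f2' by simp
    show "cmp C g2' (cmp C y' f1') = cmp C g2' (cmp C f2' x)"
      using cmp_assoc[OF d1'(4) y'(1) p(4)] y'(3) cmp_assoc[OF d1'(4) d1'(5) w] d1'(6)
        cmp_zero[OF w d1'(1)] cmp_assoc[OF x d2'(4) d2'(5)] d2'(6) zero_cmp[OF x d2'(3)] by simp
  qed
  with x y'(1,3) w show thesis
    by (intro that[of y']) (simp add: conf_hom_def)
qed

lemma pushout_conf_hom:
  assumes h: "conf_hom C X1 Y1 Z1 f1 g1 X2 Y2 Z2 f2 g2 x y z"
    and c2: "(f2, g2) \<in> Conf C X2 Y2 Z2"
    and po1: "is_pushout C X1 Y1 V1 P1 f1 n1 f1' n1'"
    and c1': "(f1', g1') \<in> Conf C V1 P1 Z1" and g1'n1': "cmp C g1' n1' = g1"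
    and c2': "(f2', g2') \<in> Conf C V2 P2 Z2" and n2': "n2' \<in> Hom C Y2 P2"
    and g2'n2': "cmp C g2' n2' = g2" and sq2: "cmp C n2' f2 = cmp C f2' n2"
    and n2: "n2 \<in> Hom C X2 V2" and v: "v \<in> Hom C V1 V2" and vn: "cmp C v n1 = cmp C n2 x"
  obtains y' where "conf_hom C V1 P1 Z1 f1' g1' V2 P2 Z2 f2' g2' v y' z"
proof -
  have x: "x \<in> Hom C X1 X2" and y: "y \<in> Hom C Y1 Y2" and z: "z \<in> Hom C Z1 Z2"
    and yf: "cmp C y f1 = cmp C f2 x" and zg: "cmp C z g1 = cmp C g2 y"
    using h unfolding conf_hom_def by auto
  note d2 = conflation_data[OF c2] and d1' = conflation_data[OF c1']
    and d2' = conflation_data[OF c2'] and p = pushout_data[OF po1]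
  have "cmp C (cmp C n2' y) f1 = cmp C n2' (cmp C f2 x)"
    using cmp_assoc[OF p(2) y n2'] yf by simp
  also have "\<dots> = cmp C f2' (cmp C n2 x)"
    using cmp_assoc[OF x d2(4) n2'] sq2 cmp_assoc[OF x n2 d2'(4)] by simp
  also have "\<dots> = cmp C (cmp C f2' v) n1"
    using vn cmp_assoc[OF p(3) v d2'(4)] by simp
  finally obtain y' where y': "y' \<in> Hom C P1 P2" "cmp C y' n1' = cmp C n2' y"
      "cmp C y' f1' = cmp C f2' v"
    using pushout_factor[OF po1 cmp_Hom[OF y n2'] cmp_Hom[OF v d2'(4)]] by blast
  have "cmp C z g1' = cmp C g2' y'"
  proof (rule pushout_hom_eqI[OF po1 cmp_Hom[OF d1'(5) z] cmp_Hom[OF y'(1) d2'(5)]])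
    show "cmp C (cmp C z g1') n1' = cmp C (cmp C g2' y') n1'"
      using cmp_assoc[OF p(5) d1'(5) z] g1'n1' zg cmp_assoc[OF p(5) y'(1) d2'(5)] y'(2)
        cmp_assoc[OF y n2' d2'(5)] g2'n2' by simp
    show "cmp C (cmp C z g1') f1' = cmp C (cmp C g2' y') f1'"
      using cmp_assoc[OF d1'(4) d1'(5) z] d1'(6) cmp_zero[OF z d1'(1)]
        cmp_assoc[OF d1'(4) y'(1) d2'(5)] y'(3) cmp_assoc[OF v d2'(4) d2'(5)] d2'(6)
        zero_cmp[OF v d2'(3)] by simp
  qed
  with v y'(1,3) z show thesis
    by (intro that[of y']) (simp add: conf_hom_def)
qed

end

definition coproduct_map ::
  "('o, 'm) excat \<Rightarrow> 'i set \<Rightarrow> 'o \<Rightarrow> ('i \<Rightarrow> 'm) \<Rightarrow> 'o \<Rightarrow> ('i \<Rightarrow> 'm) \<Rightarrow> ('i \<Rightarrow> 'm) \<Rightarrow> 'm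
    \<Rightarrow> bool" where
  "coproduct_map C K SX \<iota>X SY \<iota>Y h u \<longleftrightarrow>
     u \<in> Hom C SX SY \<and> (\<forall>k\<in>K. cmp C u (\<iota>X k) = cmp C (\<iota>Y k) (h k))"

context exact_cat
begin

lemma coproduct_inj_Hom: "is_coproduct C K X S \<iota> \<Longrightarrow> k \<in> K \<Longrightarrow> \<iota> k \<in> Hom C (X k) S"
  unfolding is_coproduct_def by blast

lemma coproduct_Ob: "is_coproduct C K X S \<iota> \<Longrightarrow> S \<in> Ob C"
  unfolding is_coproduct_def by blast

lemma coproduct_factor_unique:
  assumes "is_coproduct C K X S \<iota>" "W \<in> Ob C" "\<forall>k\<in>K. h k \<in> Hom C (X k) W"
  shows "\<exists>!u. u \<in> Hom C S W \<and> (\<forall>k\<in>K. cmp C u (\<iota> k) = h k)"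
  using assms unfolding is_coproduct_def by simp

lemma coproduct_factor:
  "is_coproduct C K X S \<iota> \<Longrightarrow> W \<in> Ob C \<Longrightarrow> \<forall>k\<in>K. h k \<in> Hom C (X k) W \<Longrightarrow>
    \<exists>u\<in>Hom C S W. \<forall>k\<in>K. cmp C u (\<iota> k) = h k"
  using coproduct_factor_unique by blast

lemma coproduct_hom_eqI:
  assumes cp: "is_coproduct C K X S \<iota>" and u1: "u1 \<in> Hom C S W" and u2: "u2 \<in> Hom C S W"
    and eq: "\<forall>k\<in>K. cmp C u1 (\<iota> k) = cmp C u2 (\<iota> k)"
  shows "u1 = u2"
proof -
  have h: "\<forall>k\<in>K. cmp C u1 (\<iota> k) \<in> Hom C (X k) W"
    using cmp_Hom[OF coproduct_inj_Hom[OF cp] u1] by blast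
  have "\<exists>!u. u \<in> Hom C S W \<and> (\<forall>k\<in>K. cmp C u (\<iota> k) = cmp C u1 (\<iota> k))"
    using coproduct_factor_unique[OF cp _ h] Hom_objects[OF u1] by blast
  then show ?thesis using u1 u2 eq by (metis (no_types, lifting))
qed

lemma coproduct_ex:
  fixes K :: "'i set"
  assumes "has_exact_coproducts C TYPE('i)" "\<forall>k\<in>K. X k \<in> Ob C"
  shows "\<exists>S \<iota>. is_coproduct C K X S \<iota>"
  using assms unfolding has_exact_coproducts_def by blast

lemma coproduct_map_ex:
  assumes cX: "is_coproduct C K X SX \<iota>X" and cY: "is_coproduct C K Y SY \<iota>Y"
    and h: "\<forall>k\<in>K. h k \<in> Hom C (X k) (Y k)"
  shows "\<exists>u. coproduct_map C K SX \<iota>X SY \<iota>Y h u"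
proof -
  have "\<forall>k\<in>K. cmp C (\<iota>Y k) (h k) \<in> Hom C (X k) SY"
    using h cmp_Hom coproduct_inj_Hom[OF cY] by blast
  from coproduct_factor[OF cX coproduct_Ob[OF cY] this] show ?thesis
    unfolding coproduct_map_def by blast
qed

lemma coproduct_map_cmp:
  assumes cX: "is_coproduct C K X SX \<iota>X" and cY: "is_coproduct C K Y SY \<iota>Y"
    and cZ: "is_coproduct C K Z SZ \<iota>Z"
    and f: "\<forall>k\<in>K. f k \<in> Hom C (X k) (Y k)" and g: "\<forall>k\<in>K. g k \<in> Hom C (Y k) (Z k)"
    and u: "coproduct_map C K SX \<iota>X SY \<iota>Y f u" and v: "coproduct_map C K SY \<iota>Y SZ \<iota>Z g v"
  shows "coproduct_map C K SX \<iota>X SZ \<iota>Z (\<lambda>k. cmp C (g k) (f k)) (cmp C v u)"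
  unfolding coproduct_map_def
proof
  have uH: "u \<in> Hom C SX SY" and vH: "v \<in> Hom C SY SZ"
    using u v unfolding coproduct_map_def by blast+
  then show "cmp C v u \<in> Hom C SX SZ" by (rule cmp_Hom)
  show "\<forall>k\<in>K. cmp C (cmp C v u) (\<iota>X k) = cmp C (\<iota>Z k) (cmp C (g k) (f k))"
  proof
    fix k assume k: "k \<in> K"
    note iX = coproduct_inj_Hom[OF cX k] and iY = coproduct_inj_Hom[OF cY k]
      and iZ = coproduct_inj_Hom[OF cZ k]
    have "cmp C (cmp C v u) (\<iota>X k) = cmp C v (cmp C (\<iota>Y k) (f k))"
      using cmp_assoc[OF iX uH vH] u k unfolding coproduct_map_def by simp
    also have "\<dots> = cmp C (cmp C (\<iota>Z k) (g k)) (f k)"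
      using cmp_assoc[OF bspec[OF f k] iY vH] v k unfolding coproduct_map_def by simp
    also have "\<dots> = cmp C (\<iota>Z k) (cmp C (g k) (f k))"
      using cmp_assoc[OF bspec[OF f k] bspec[OF g k] iZ] by simp
    finally show "cmp C (cmp C v u) (\<iota>X k) = cmp C (\<iota>Z k) (cmp C (g k) (f k))" .
  qed
qed

lemma coproduct_map_unique:
  assumes cX: "is_coproduct C K X SX \<iota>X"
    and u: "coproduct_map C K SX \<iota>X SY \<iota>Y h u" and u': "coproduct_map C K SX \<iota>X SY \<iota>Y h' u'"
    and hh': "\<forall>k\<in>K. h k = h' k"
  shows "u = u'"
proof (rule coproduct_hom_eqI[OF cX])
  show "u \<in> Hom C SX SY" "u' \<in> Hom C SX SY" using u u' unfolding coproduct_map_def by blast+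
  show "\<forall>k\<in>K. cmp C u (\<iota>X k) = cmp C u' (\<iota>X k)"
    using u u' hh' unfolding coproduct_map_def by simp
qed

lemma coproduct_map_conflation:
  fixes K :: "'i set"
  assumes "has_exact_coproducts C TYPE('i)"
    and "\<forall>k\<in>K. (f k, g k) \<in> Conf C (X k) (Y k) (Z k)"
    and "is_coproduct C K X SX \<iota>X" "is_coproduct C K Y SY \<iota>Y" "is_coproduct C K Z SZ \<iota>Z"
    and "coproduct_map C K SX \<iota>X SY \<iota>Y f u" "coproduct_map C K SY \<iota>Y SZ \<iota>Z g v"
  shows "(u, v) \<in> Conf C SX SY SZ"
  using assms(1)[unfolded has_exact_coproducts_def, THEN conjunct2, rule_format,
      where K=K and X=X and Y=Y and Z=Z and f=f and g=g and SX=SX and \<iota>X=\<iota>X and SY=SY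
        and \<iota>Y=\<iota>Y and SZ=SZ and \<iota>Z=\<iota>Z and u=u and v=v] assms(2-)
  unfolding coproduct_map_def by blast

section \<open>Ext-orthogonality of coproduct maps\<close>

(* Pulled back along i0 and i1, the Ext(a,b)-construction becomes the Ext(x,b)-construction,
   which splits; a section of the pulled-back deflation then lifts i0 through g''. *)
lemma Ext_zero_square_lift:
  assumes c1: "(f, g) \<in> Conf C B0 D A1" and c2: "(f', g') \<in> Conf C B1 E A1"
    and h1: "conf_hom C B0 D A1 f g B1 E A1 f' g' b d (idt C A1)"
    and c3: "(f'', g'') \<in> Conf C B1 F A0"
    and h2: "conf_hom C B1 F A0 f'' g'' B1 E A1 f' g' (idt C B1) e a"
    and i0: "i0 \<in> Hom C X0 A0" and i1: "i1 \<in> Hom C X1 A1" and x: "x \<in> Hom C X0 X1"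
    and sq: "cmp C a i0 = cmp C i1 x" and ext: "Ext_zero C X0 X1 x B0 B1 b"
  shows "\<exists>s\<in>Hom C X0 F. cmp C g'' s = i0"
proof -
  obtain D' f1 g1 d' where pbD: "is_pullback C A1 D X1 D' g i1 g1 d'"
    and cD: "(f1, g1) \<in> Conf C B0 D' X1" and d'f1: "cmp C d' f1 = f"
    using pullback_conflation[OF c1 i1] .
  obtain E' f2 g2 e' where pbE: "is_pullback C A1 E X1 E' g' i1 g2 e'"
    and cE: "(f2, g2) \<in> Conf C B1 E' X1" and e'f2: "cmp C e' f2 = f'"
    using pullback_conflation[OF c2 i1] .
  obtain F' f3 g3 e3 where pbF: "is_pullback C A0 F X0 F' g'' i0 g3 e3"
    and cF: "(f3, g3) \<in> Conf C B1 F' X0" and e3f3: "cmp C e3 f3 = f''"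
    using pullback_conflation[OF c3 i0] .
  note pD = pullback_data[OF pbD] and pF = pullback_data[OF pbF]
  have X1: "X1 \<in> Ob C" using Hom_objects[OF x] by blast
  have "cmp C (idt C A1) i1 = cmp C i1 (idt C X1)"
    using cmp_idt_left[OF i1] cmp_idt_right[OF i1] by simp
  then obtain d1 where "conf_hom C B0 D' X1 f1 g1 B1 E' X1 f2 g2 b d1 (idt C X1)"
    using pullback_conf_hom[OF h1 c1 pbE cE e'f2 cD pD(5) d'f1 pD(6) i1 idt_Hom[OF X1]] by blast
  moreover obtain e1 where "conf_hom C B1 F' X0 f3 g3 B1 E' X1 f2 g2 (idt C B1) e1 x"
    using pullback_conf_hom[OF h2 c3 pbE cE e'f2 cF pF(5) e3f3 pF(6) i0 x sq] by blast
  ultimately have "splits C B1 F' f3"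
    using ext cD cE cF unfolding Ext_zero_def by blast
  then obtain r where "r \<in> Hom C F' B1" "cmp C r f3 = idt C B1" unfolding splits_def by blast
  then obtain \<sigma> where \<sigma>: "\<sigma> \<in> Hom C X0 F'" "cmp C g3 \<sigma> = idt C X0"
    using section_if_splits[OF cF] by blast
  have "cmp C g'' (cmp C e3 \<sigma>) = i0"
    using cmp_assoc[OF \<sigma>(1) pF(5) pF(2)] pF(6) cmp_assoc[OF \<sigma>(1) pF(4) i0] \<sigma>(2)
      cmp_idt_right[OF i0] by simp
  then show ?thesis using cmp_Hom[OF \<sigma>(1) pF(5)] by blast
qed

lemma Ext_zero_coproduct_map:
  assumes cA0: "is_coproduct C K A0 SA0 \<iota>0" and cA1: "is_coproduct C K A1 SA1 \<iota>1"
    and a: "coproduct_map C K SA0 \<iota>0 SA1 \<iota>1 a a\<^sub>\<Sigma>"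
    and ext: "\<forall>k\<in>K. a k \<in> Hom C (A0 k) (A1 k) \<and> Ext_zero C (A0 k) (A1 k) (a k) B0 B1 b"
  shows "Ext_zero C SA0 SA1 a\<^sub>\<Sigma> B0 B1 b"
  unfolding Ext_zero_def
proof (intro allI impI, elim conjE)
  fix D f g E f' g' d F f'' g'' e
  assume c1: "(f, g) \<in> Conf C B0 D SA1" and c2: "(f', g') \<in> Conf C B1 E SA1"
    and h1: "conf_hom C B0 D SA1 f g B1 E SA1 f' g' b d (idt C SA1)"
    and c3: "(f'', g'') \<in> Conf C B1 F SA0"
    and h2: "conf_hom C B1 F SA0 f'' g'' B1 E SA1 f' g' (idt C B1) e a\<^sub>\<Sigma>"
  note d3 = conflation_data[OF c3]
  have "\<forall>k\<in>K. \<exists>s\<in>Hom C (A0 k) F. cmp C g'' s = \<iota>0 k"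
    using Ext_zero_square_lift[OF c1 c2 h1 c3 h2 coproduct_inj_Hom[OF cA0] coproduct_inj_Hom[OF cA1]]
      a ext unfolding coproduct_map_def by blast
  then obtain s where s: "\<forall>k\<in>K. s k \<in> Hom C (A0 k) F \<and> cmp C g'' (s k) = \<iota>0 k"
    by metis
  then obtain t where t: "t \<in> Hom C SA0 F" "\<forall>k\<in>K. cmp C t (\<iota>0 k) = s k"
    using coproduct_factor[OF cA0 d3(2)] by blast
  have "cmp C g'' t = idt C SA0"
  proof (rule coproduct_hom_eqI[OF cA0 cmp_Hom[OF t(1) d3(5)] idt_Hom[OF d3(3)]], intro ballI)
    fix k assume k: "k \<in> K"
    note i = coproduct_inj_Hom[OF cA0 k]
    show "cmp C (cmp C g'' t) (\<iota>0 k) = cmp C (idt C SA0) (\<iota>0 k)"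
      using cmp_assoc[OF i t(1) d3(5)] t(2) s k cmp_idt_left[OF i] by simp
  qed
  then show "splits C B1 F f''" using splits_if_section[OF c3 t(1)] by blast
qed

lemma perp_ideal_coproduct_map:
  assumes cA0: "is_coproduct C K A0 SA0 \<iota>0" and cA1: "is_coproduct C K A1 SA1 \<iota>1"
    and a: "coproduct_map C K SA0 \<iota>0 SA1 \<iota>1 a a\<^sub>\<Sigma>"
    and perp: "\<forall>k\<in>K. a k \<in> perp_ideal C (J k) (A0 k) (A1 k)"
    and sub: "\<forall>k\<in>K. \<forall>B0 B1. L B0 B1 \<subseteq> J k B0 B1"
  shows "a\<^sub>\<Sigma> \<in> perp_ideal C L SA0 SA1"
proof -
  have "Ext_zero C SA0 SA1 a\<^sub>\<Sigma> B0 B1 b" if "b \<in> L B0 B1" for B0 B1 b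
    using Ext_zero_coproduct_map[OF cA0 cA1 a] perp sub that unfolding perp_ideal_def by blast
  then show ?thesis using a unfolding perp_ideal_def coproduct_map_def by blast
qed

end

section \<open>Special conflations\<close>

(* A special preenvelope without the requirement that its inflation lie in J: unlike that
   requirement, this is preserved by pushouts and, relative to the intersection of the ideals,
   by coproducts. *)
definition special_conflation ::
  "('o, 'm) excat \<Rightarrow> ('o \<Rightarrow> 'o \<Rightarrow> 'm set) \<Rightarrow> 'o \<Rightarrow> 'o \<Rightarrow> 'o \<Rightarrow> 'm \<Rightarrow> 'm \<Rightarrow> bool" where
  "special_conflation C J X Y Z u v \<longleftrightarrow> (u, v) \<in> Conf C X Y Z \<and>
     (\<exists>Y1 Z1 u1 v1 y z. (u1, v1) \<in> Conf C X Y1 Z1 \<and>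
        conf_hom C X Y Z u v X Y1 Z1 u1 v1 (idt C X) y z \<and> z \<in> perp_ideal C J Z Z1)"

lemma special_preenvelope_iff:
  "special_preenvelope C J B C0 j \<longleftrightarrow>
    j \<in> J B C0 \<and> (\<exists>A0 p0. special_conflation C J B C0 A0 j p0)"
  unfolding special_preenvelope_def special_conflation_def by blast

lemma ideal_cmp_left: "is_ideal C J \<Longrightarrow> f \<in> J A B \<Longrightarrow> g \<in> Hom C B D \<Longrightarrow> cmp C g f \<in> J A D"
  unfolding is_ideal_def by blast

context exact_cat
begin

lemma is_ideal_Inter_ideal:
  assumes "\<forall>i\<in>I. is_ideal C (J i)"
  shows "is_ideal C (Inter_ideal C I J)"
  using assms zero_Hom add_Hom cmp_Hom unfolding is_ideal_def Inter_ideal_def by (auto 4 3)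

lemma pushout_special_conflation:
  assumes sc: "special_conflation C L X Y Z u v" and n: "n \<in> Hom C X V"
  obtains P j p n'
  where "special_conflation C L V P Z j p" "n' \<in> Hom C Y P" "cmp C n' u = cmp C j n"
proof -
  obtain Y1 Z1 u1 v1 y z where c: "(u, v) \<in> Conf C X Y Z" and c1: "(u1, v1) \<in> Conf C X Y1 Z1"
    and h: "conf_hom C X Y Z u v X Y1 Z1 u1 v1 (idt C X) y z" and z: "z \<in> perp_ideal C L Z Z1"
    using sc unfolding special_conflation_def by blast
  obtain P j p n' where po: "is_pushout C X Y V P u n j n'" and cj: "(j, p) \<in> Conf C V P Z"
    and pn': "cmp C p n' = v"
    using pushout_conflation[OF c n] .
  obtain P1 j1 p1 n1' where po1: "is_pushout C X Y1 V P1 u1 n j1 n1'"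
    and cj1: "(j1, p1) \<in> Conf C V P1 Z1" and p1n1': "cmp C p1 n1' = v1"
    using pushout_conflation[OF c1 n] .
  note q = pushout_data[OF po] and q1 = pushout_data[OF po1]
  have V: "V \<in> Ob C" using Hom_objects[OF n] by blast
  have "cmp C (idt C V) n = cmp C n (idt C X)"
    using cmp_idt_left[OF n] cmp_idt_right[OF n] by simp
  then obtain y' where "conf_hom C V P Z j p V P1 Z1 j1 p1 (idt C V) y' z"
    using pushout_conf_hom[OF h c1 po cj pn' cj1 q1(5) p1n1' q1(6) n idt_Hom[OF V]] by blast
  then have "special_conflation C L V P Z j p"
    unfolding special_conflation_def using cj cj1 z by blast
  then show thesis using that q(5,6) by blast
qed

lemma coproduct_special_conflation:
  fixes K :: "'i set"
  assumes hec: "has_exact_coproducts C TYPE('i)"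
    and sc: "\<forall>k\<in>K. special_conflation C (J k) (X k) (Y k) (Z k) (u k) (v k)"
    and sub: "\<forall>k\<in>K. \<forall>A B. L A B \<subseteq> J k A B"
    and cX: "is_coproduct C K X SX \<iota>X" and cY: "is_coproduct C K Y SY \<iota>Y"
    and cZ: "is_coproduct C K Z SZ \<iota>Z"
    and u: "coproduct_map C K SX \<iota>X SY \<iota>Y u u\<^sub>\<Sigma>" and v: "coproduct_map C K SY \<iota>Y SZ \<iota>Z v v\<^sub>\<Sigma>"
  shows "special_conflation C L SX SY SZ u\<^sub>\<Sigma> v\<^sub>\<Sigma>"
proof -
  obtain Y1 Z1 u1 v1 y z where data: "\<forall>k\<in>K. (u1 k, v1 k) \<in> Conf C (X k) (Y1 k) (Z1 k) \<and>
      conf_hom C (X k) (Y k) (Z k) (u k) (v k) (X k) (Y1 k) (Z1 k) (u1 k) (v1 k)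
        (idt C (X k)) (y k) (z k) \<and> z k \<in> perp_ideal C (J k) (Z k) (Z1 k)"
    using sc unfolding special_conflation_def by metis
  have c: "\<forall>k\<in>K. (u k, v k) \<in> Conf C (X k) (Y k) (Z k)"
    and c1: "\<forall>k\<in>K. (u1 k, v1 k) \<in> Conf C (X k) (Y1 k) (Z1 k)"
    using sc data unfolding special_conflation_def by blast+
  have hom: "\<forall>k\<in>K. y k \<in> Hom C (Y k) (Y1 k) \<and> z k \<in> Hom C (Z k) (Z1 k) \<and>
      cmp C (y k) (u k) = u1 k \<and> cmp C (z k) (v k) = cmp C (v1 k) (y k)"
    using data conflation_data(4)[of "u1 _"] cmp_idt_right unfolding conf_hom_def by metis
  obtain SY1 \<iota>Y1 SZ1 \<iota>Z1 where cY1: "is_coproduct C K Y1 SY1 \<iota>Y1"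
    and cZ1: "is_coproduct C K Z1 SZ1 \<iota>Z1"
    using coproduct_ex[OF hec] c1 conflation_data(2,3) by metis
  obtain u1\<^sub>\<Sigma> v1\<^sub>\<Sigma> y\<^sub>\<Sigma> z\<^sub>\<Sigma>
    where u1: "coproduct_map C K SX \<iota>X SY1 \<iota>Y1 u1 u1\<^sub>\<Sigma>"
      and v1: "coproduct_map C K SY1 \<iota>Y1 SZ1 \<iota>Z1 v1 v1\<^sub>\<Sigma>"
      and y: "coproduct_map C K SY \<iota>Y SY1 \<iota>Y1 y y\<^sub>\<Sigma>"
      and z: "coproduct_map C K SZ \<iota>Z SZ1 \<iota>Z1 z z\<^sub>\<Sigma>"
    using coproduct_map_ex[OF cX cY1] coproduct_map_ex[OF cY1 cZ1] coproduct_map_ex[OF cY cY1]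
      coproduct_map_ex[OF cZ cZ1] c1 hom conflation_data(4,5) by metis
  have "cmp C y\<^sub>\<Sigma> u\<^sub>\<Sigma> = u1\<^sub>\<Sigma>"
    using coproduct_map_unique[OF cX coproduct_map_cmp[OF cX cY cY1 _ _ u y] u1]
      c conflation_data(4) hom by blast
  moreover have "cmp C z\<^sub>\<Sigma> v\<^sub>\<Sigma> = cmp C v1\<^sub>\<Sigma> y\<^sub>\<Sigma>"
    using coproduct_map_unique[OF cY coproduct_map_cmp[OF cY cZ cZ1 _ _ v z]
        coproduct_map_cmp[OF cY cY1 cZ1 _ _ y v1]]
      c c1 conflation_data(5) hom by blast
  ultimately have "conf_hom C SX SY SZ u\<^sub>\<Sigma> v\<^sub>\<Sigma> SX SY1 SZ1 u1\<^sub>\<Sigma> v1\<^sub>\<Sigma> (idt C SX) y\<^sub>\<Sigma> z\<^sub>\<Sigma>"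
    using idt_Hom[OF coproduct_Ob[OF cX]] cmp_idt_right u1 y z
    unfolding conf_hom_def coproduct_map_def by metis
  moreover have "z\<^sub>\<Sigma> \<in> perp_ideal C L SZ SZ1"
    using perp_ideal_coproduct_map[OF cZ cZ1 z _ sub] data by blast
  ultimately show ?thesis
    unfolding special_conflation_def
    using coproduct_map_conflation[OF hec c cX cY cZ u v]
      coproduct_map_conflation[OF hec c1 cX cY1 cZ1 u1 v1] by blast
qed

lemma special_preenveloping_Inter_ideal:
  fixes I :: "'i set" and J :: "'i \<Rightarrow> 'o \<Rightarrow> 'o \<Rightarrow> 'm set"
  assumes hec: "has_exact_coproducts C TYPE('i)"
    and sp: "\<forall>i\<in>I. special_preenveloping C (J i)"
  shows "special_preenveloping C (Inter_ideal C I J)"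
proof -
  have ideals: "\<forall>i\<in>I. is_ideal C (J i)" using sp unfolding special_preenveloping_def by blast
  have "\<exists>P j. special_preenvelope C (Inter_ideal C I J) B P j" if B: "B \<in> Ob C" for B
  proof -
    have "\<forall>i\<in>I. \<exists>C0 j A0 p. j \<in> J i B C0 \<and> special_conflation C (J i) B C0 A0 j p"
      using sp B unfolding special_preenveloping_def special_preenvelope_iff by blast
    then obtain C0 A0 j p where env: "\<forall>i\<in>I. j i \<in> J i B (C0 i) \<and>
        special_conflation C (J i) B (C0 i) (A0 i) (j i) (p i)"
      by metis
    then have c: "\<forall>i\<in>I. (j i, p i) \<in> Conf C B (C0 i) (A0 i)"
      unfolding special_conflation_def by blast
    obtain SB \<iota>B SC \<iota>C SA \<iota>A where cB: "is_coproduct C I (\<lambda>_. B) SB \<iota>B"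
      and cC: "is_coproduct C I C0 SC \<iota>C" and cA: "is_coproduct C I A0 SA \<iota>A"
      using coproduct_ex[OF hec] B c conflation_data(2,3) by metis
    obtain j\<^sub>\<Sigma> p\<^sub>\<Sigma> where jS: "coproduct_map C I SB \<iota>B SC \<iota>C j j\<^sub>\<Sigma>"
      and pS: "coproduct_map C I SC \<iota>C SA \<iota>A p p\<^sub>\<Sigma>"
      using coproduct_map_ex[OF cB cC] coproduct_map_ex[OF cC cA] c conflation_data(4,5) by metis
    have "\<forall>i\<in>I. \<forall>A B. Inter_ideal C I J A B \<subseteq> J i A B" unfolding Inter_ideal_def by blast
    then have "special_conflation C (Inter_ideal C I J) SB SC SA j\<^sub>\<Sigma> p\<^sub>\<Sigma>"
      using coproduct_special_conflation[OF hec _ _ cB cC cA jS pS] env by blast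
    moreover obtain codiag where codiag: "codiag \<in> Hom C SB B" "\<forall>i\<in>I. cmp C codiag (\<iota>B i) = idt C B"
      using coproduct_factor[OF cB B, of "\<lambda>_. idt C B"] idt_Hom[OF B] by blast
    ultimately obtain P j' p' n where sc: "special_conflation C (Inter_ideal C I J) B P SA j' p'"
      and n: "n \<in> Hom C SC P" "cmp C n j\<^sub>\<Sigma> = cmp C j' codiag"
      using pushout_special_conflation by blast
    have j': "j' \<in> Hom C B P" using sc conflation_data(4) unfolding special_conflation_def by blast
    have "j' \<in> J i B P" if i: "i \<in> I" for i
    proof -
      \<comment> \<open>the coprojection splits the codiagonal, so j' factors through j i\<close>
      note iB = coproduct_inj_Hom[OF cB i] and iC = coproduct_inj_Hom[OF cC i]
      have ji: "j i \<in> Hom C B (C0 i)" using c i conflation_data(4) by blast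
      have "j' = cmp C (cmp C j' codiag) (\<iota>B i)"
        using cmp_assoc[OF iB codiag(1) j'] codiag(2) i cmp_idt_right[OF j'] by simp
      also have "\<dots> = cmp C n (cmp C j\<^sub>\<Sigma> (\<iota>B i))"
        using n(2) cmp_assoc[OF iB _ n(1)] jS unfolding coproduct_map_def by simp
      also have "\<dots> = cmp C (cmp C n (\<iota>C i)) (j i)"
        using jS i cmp_assoc[OF ji iC n(1)] unfolding coproduct_map_def by simp
      finally show ?thesis
        using ideal_cmp_left ideals env i cmp_Hom[OF iC n(1)] by metis
    qed
    then have "j' \<in> Inter_ideal C I J B P" unfolding Inter_ideal_def using j' by blast
    then show ?thesis using sc unfolding special_preenvelope_iff by blast
  qed
  then show ?thesis
    unfolding special_preenveloping_def using is_ideal_Inter_ideal[OF ideals] by blast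
qed

end

theorem theorem5p5:
  fixes C :: "('o, 'm) excat" and I :: "'i set" and J :: "'i \<Rightarrow> 'o \<Rightarrow> 'o \<Rightarrow> 'm set"
  assumes "exact_category C"
    and "has_exact_coproducts C TYPE('i)"
    and "\<forall>i\<in>I. special_preenveloping C (J i)"
  shows "special_preenveloping C (Inter_ideal C I J)"
proof -
  interpret exact_cat C by (rule exact_cat.intro) (fact assms(1))
  show ?thesis using special_preenveloping_Inter_ideal[OF assms(2,3)] .
qed

end
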